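(* For $n\geq1$ let $\ell_n=\sqrt[n]{n!}$ and $x_n=\log(\ell_{n+1}/\ell_n)$. Then for every integer $n\geq 468$, $$\frac{\ell_{n+2}}{\ell_{n+1}}+\frac{\ell_n}{\ell_{n+1}}=2\exp\Big(\frac{x_{n+1}-x_n}{2}\Big)\cosh\Big(\frac{x_{n+1}+x_n}{2}\Big)\leq 2\bigg(1-\frac{25}{144n^3}-\frac{1}{4n^4}+\frac{\tfrac12\log n+\tfrac{101}{288}+\tfrac12\log(2\pi)}{n^5}\bigg)<2.$$
   Context: $\log$ denotes the natural logarithm. *)

theory Defs
  imports Complex_Main
begin

definition ell :: "nat \<Rightarrow> real" where
  "ell n = root n (fact n)"

definition xseq :: "nat \<Rightarrow> real" where
  "xseq n = ln (ell (Suc n) / ell n)"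

end

theory Submission
  imports Defs
begin

text \<open>
  Put X = x(n), Y = x(n+1) and t = 1/n. The left-hand side is exp Y + exp (-X), and
  (n + 2) Y = n X + ln ((n + 2)/(n + 1)) expresses Y through X. The elementary Stirling
  bounds n ln n - n + 1 \<le> ln n! \<le> (n + 1/2) ln n - n + 1 confine X to the interval
  [t - t^2 - t^2 ln n / 2, t - t^2/2]. A fourth order Taylor bound reduces
  exp Y + exp (-X) - 2 to Y - X + X Y up to O(t^4); times 1 + 2t this is a convex quadratic
  in X whose vertex lies right of that interval, so it is largest at the lower end, where it
  is -t^3/2 + O(t^3 (ln n)^2 / n). This beats -25 t^3/72 as soon as (ln n)^2 \<le> n/5.
  The bound so obtained does not need the n^-5 term of the statement, which is positive but
  smaller than the n^-3 term.
\<close>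

lemma ln_add_one_ge:
  fixes u :: real
  assumes "0 \<le> u"
  shows "u - u^2/2 \<le> ln (1 + u)"
proof -
  let ?f = "\<lambda>x::real. ln (1 + x) - x + x^2/2"
  have "?f 0 \<le> ?f u"
  proof (rule DERIV_nonneg_imp_nondecreasing[OF assms])
    fix x :: real
    assume x: "0 \<le> x" "x \<le> u"
    have "(?f has_real_derivative (1/(1 + x) - 1 + x)) (at x)"
      using x by (auto intro!: derivative_eq_intros)
    moreover have "1/(1 + x) - 1 + x = x^2/(1 + x)"
      using x by (simp add: field_simps power2_eq_square)
    ultimately show "\<exists>y. (?f has_real_derivative y) (at x) \<and> 0 \<le> y"
      using x by auto
  qed
  then show ?thesis by simp
qed

lemma ln_add_one_le:
  fixes u :: real
  assumes "0 \<le> u"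
  shows "ln (1 + u) \<le> u - u^2/2 + u^3/3"
proof -
  let ?f = "\<lambda>x::real. x - x^2/2 + x^3/3 - ln (1 + x)"
  have "?f 0 \<le> ?f u"
  proof (rule DERIV_nonneg_imp_nondecreasing[OF assms])
    fix x :: real
    assume x: "0 \<le> x" "x \<le> u"
    have "(?f has_real_derivative (1 - x + x^2 - 1/(1 + x))) (at x)"
      using x by (auto intro!: derivative_eq_intros simp: power2_eq_square)
    moreover have "1 - x + x^2 - 1/(1 + x) = x^3/(1 + x)"
      using x by (simp add: field_simps power2_eq_square power3_eq_cube)
    ultimately show "\<exists>y. (?f has_real_derivative y) (at x) \<and> 0 \<le> y"
      using x by auto
  qed
  then show ?thesis by simp
qed

lemma ln_add_one_ge_pade:
  fixes u :: real
  assumes "0 \<le> u"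
  shows "2*u/(2 + u) \<le> ln (1 + u)"
proof -
  let ?f = "\<lambda>x::real. ln (1 + x) + 4/(2 + x)"
  have "?f 0 \<le> ?f u"
  proof (rule DERIV_nonneg_imp_nondecreasing[OF assms])
    fix x :: real
    assume x: "0 \<le> x" "x \<le> u"
    have "(?f has_real_derivative (1/(1 + x) - 4/(2 + x)^2)) (at x)"
      using x by (auto intro!: derivative_eq_intros simp: field_simps power2_eq_square)
    moreover have "1/(1 + x) - 4/(2 + x)^2 = x^2/((1 + x) * (2 + x)^2)"
      using x by (simp add: divide_simps) (simp add: algebra_simps power2_eq_square)
    ultimately show "\<exists>y. (?f has_real_derivative y) (at x) \<and> 0 \<le> y"
      using x by auto
  qed
  moreover have "2*u/(2 + u) = 2 - 4/(2 + u)"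
    using assms by (simp add: field_simps)
  ultimately show ?thesis by simp
qed

lemma ln_le_half_self:
  fixes y :: real
  assumes "0 < y"
  shows "ln y \<le> y/2"
proof -
  have "ln y = ln (y/2) + ln 2"
    using assms by (simp add: ln_div)
  also have "\<dots> \<le> (y/2 - 1) + 1"
    using assms ln_le_minus_one[of "y/2"] ln_le_minus_one[of 2] by simp
  finally show ?thesis by simp
qed

lemma ln_squared_le:
  fixes x :: real
  assumes "400 \<le> x"
  shows "(ln x)^2 \<le> x/5"
proof -
  define y where "y = sqrt (sqrt x)"
  have x0: "0 < x" using assms by simp
  have y0: "0 < y" unfolding y_def using x0 by simp
  have "ln x = 4 * ln y"
    unfolding y_def using x0 by (simp add: ln_sqrt)
  also have "\<dots> \<le> 2 * y"
    using ln_le_half_self[OF y0] by simp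
  finally have "(ln x)^2 \<le> (2 * y)^2"
    using assms by (intro power_mono) auto
  also have "\<dots> = 4 * sqrt x"
    unfolding y_def using x0 by (simp add: power2_eq_square)
  also have "\<dots> \<le> x/5"
  proof -
    have "20 \<le> sqrt x"
      using real_sqrt_le_mono[OF assms] by simp
    then have "20 * sqrt x \<le> sqrt x * sqrt x"
      by (rule mult_right_mono) (use x0 in simp)
    then show ?thesis using x0 by simp
  qed
  finally show ?thesis .
qed

lemma exp_le_taylor4:
  fixes y :: real
  assumes "0 \<le> y" "y \<le> 1"
  shows "exp y \<le> 1 + y + y^2/2 + y^3/6 + y^4/8"
proof -
  obtain \<theta> where \<theta>: "\<bar>\<theta>\<bar> \<le> \<bar>y\<bar>"
    and exp_y: "exp y = (\<Sum>k<4. y^k / fact k) + exp \<theta> / fact 4 * y^4"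
    using Maclaurin_exp_le[of y 4] by blast
  have "\<theta> \<le> 1"
    using \<theta> assms by linarith
  then have "exp \<theta> \<le> 3"
    using exp_le by (meson exp_le_cancel_iff order_trans)
  then have "exp \<theta> / fact 4 * y^4 \<le> 3 / fact 4 * y^4"
    by (intro mult_right_mono divide_right_mono) auto
  then show ?thesis
    using exp_y by (simp add: eval_nat_numeral)
qed

lemma exp_neg_le_taylor4:
  fixes x :: real
  assumes "0 \<le> x"
  shows "exp (-x) \<le> 1 - x + x^2/2 - x^3/6 + x^4/24"
proof -
  obtain \<theta> where exp_x: "exp (-x) = (\<Sum>k<5. (-x)^k / fact k) + exp \<theta> / fact 5 * (-x)^5"
    using Maclaurin_exp_le[of "-x" 5] by blast
  have "exp \<theta> / fact 5 * (-x)^5 \<le> 0"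
    using assms by (simp add: mult_nonneg_nonpos power_minus_odd)
  then show ?thesis
    using exp_x by (simp add: eval_nat_numeral)
qed

lemma exp_add_exp_neg_le_taylor:
  fixes x y :: real
  assumes "0 \<le> y" "y \<le> x" "x \<le> 1"
  shows "exp y + exp (-x) \<le> 2 + (y - x + x*y) + (y - x)^2/2 + x^4/6"
proof -
  have "y^3 \<le> x^3" "y^4 \<le> x^4"
    using assms by (auto intro: power_mono)
  moreover have "(y^2 + x^2)/2 = x*y + (y - x)^2/2"
    by (simp add: power2_eq_square field_simps)
  moreover have "exp y \<le> 1 + y + y^2/2 + y^3/6 + y^4/8"
    using assms by (intro exp_le_taylor4) auto
  moreover have "exp (-x) \<le> 1 - x + x^2/2 - x^3/6 + x^4/24"
    using assms by (intro exp_neg_le_taylor4) auto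
  ultimately show ?thesis
    by argo
qed

lemma exp_add_exp_neg_eq_cosh:
  fixes x y :: real
  shows "exp y + exp (-x) = 2 * exp ((y - x)/2) * cosh ((y + x)/2)"
proof -
  have "2 * exp ((y - x)/2) * cosh ((y + x)/2)
      = exp ((y - x)/2) * exp ((y + x)/2) + exp ((y - x)/2) * exp (- ((y + x)/2))"
    by (simp add: cosh_def algebra_simps)
  also have "\<dots> = exp y + exp (-x)"
    unfolding exp_add[symmetric] by (simp add: field_simps)
  finally show ?thesis ..
qed

lemma ln_fact_Suc:
  "ln (fact (Suc k) :: real) = ln (real k + 1) + ln (fact k)"
proof -
  have "(fact (Suc k) :: real) = (real k + 1) * fact k"
    by (simp add: add.commute)
  then show ?thesis
    by (simp add: ln_mult_pos)
qed

lemma ln_succ_diff_bounds: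
  fixes r :: real
  assumes "0 < r"
  shows "1 - 1/(2*r) \<le> r * (ln (r + 1) - ln r)"
    and "r * (ln (r + 1) - ln r) \<le> 1"
    and "1 \<le> (r + 1/2) * (ln (r + 1) - ln r)"
proof -
  have "1 + 1/r = (r + 1)/r"
    using assms by (simp add: field_simps)
  then have diff: "ln (r + 1) - ln r = ln (1 + 1/r)"
    using assms by (simp add: ln_div)
  have "r * (1/r - (1/r)^2/2) \<le> r * ln (1 + 1/r)"
    using assms ln_add_one_ge[of "1/r"] by (intro mult_left_mono) auto
  moreover have "r * (1/r - (1/r)^2/2) = 1 - 1/(2*r)"
    using assms by (simp add: field_simps power2_eq_square)
  ultimately show "1 - 1/(2*r) \<le> r * (ln (r + 1) - ln r)"
    using diff by simp
  have "r * ln (1 + 1/r) \<le> r * (1/r)"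
    using assms ln_add_one_self_le_self[of "1/r"] by (intro mult_left_mono) auto
  then show "r * (ln (r + 1) - ln r) \<le> 1"
    using assms diff by simp
  have "1/(r + 1/2) \<le> ln (1 + 1/r)"
    using assms ln_add_one_ge_pade[of "1/r"] by (simp add: field_simps)
  then have "(r + 1/2) * (1/(r + 1/2)) \<le> (r + 1/2) * ln (1 + 1/r)"
    using assms by (intro mult_left_mono) auto
  then show "1 \<le> (r + 1/2) * (ln (r + 1) - ln r)"
    using assms diff by simp
qed

lemma ln_fact_bounds:
  assumes "1 \<le> n"
  shows "real n * ln n - n + 1 \<le> ln (fact n)
    \<and> ln (fact n) \<le> (real n + 1/2) * ln n - n + 1"
  using assms
proof (induction n rule: dec_induct)
  case base
  show ?case by simp
next
  case (step k)
  have "0 < real k" using step.hyps by simp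
  from ln_succ_diff_bounds[OF this] step.IH show ?case
    by (simp add: ln_fact_Suc algebra_simps del: fact_Suc)
qed

lemma ell_pos: "0 < n \<Longrightarrow> 0 < ell n"
  unfolding ell_def by simp

lemma ell_Suc_div: "0 < n \<Longrightarrow> ell (Suc n) / ell n = exp (xseq n)"
  using ell_pos[of n] ell_pos[of "Suc n"] by (simp add: xseq_def)

lemma xseq_eq:
  assumes "0 < n"
  shows "xseq n = (real n * ln (real n + 1) - ln (fact n)) / (real n * (real n + 1))"
proof -
  have "xseq n = ln (fact (Suc n)) / real (Suc n) - ln (fact n) / real n"
    using assms ell_pos[of n] ell_pos[of "Suc n"]
    by (simp add: xseq_def ln_div ell_def ln_root)
  then show ?thesis
    using assms by (simp add: ln_fact_Suc field_simps del: fact_Suc)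
qed

lemma xseq_Suc:
  assumes "0 < n"
  shows "(real n + 2) * xseq (n + 1) = real n * xseq n + ln ((real n + 2) / (real n + 1))"
proof -
  define r where "r = real n"
  define L where "L = ln (fact n :: real)"
  have r: "0 < r" using assms unfolding r_def by simp
  have "xseq (Suc n) = ((r + 1) * ln (r + 2) - (ln (r + 1) + L)) / ((r + 1) * (r + 2))"
    using xseq_eq[of "Suc n"] unfolding r_def L_def
    by (simp add: ln_fact_Suc add_ac del: fact_Suc)
  then have "(r + 2) * xseq (Suc n) = ((r + 1) * ln (r + 2) - (ln (r + 1) + L)) / (r + 1)"
    using r by simp
  also have "\<dots> = ln (r + 2) - (ln (r + 1) + L) / (r + 1)"
    using r by (simp add: diff_divide_distrib)
  finally have "(r + 2) * xseq (Suc n) = ln (r + 2) - (ln (r + 1) + L) / (r + 1)" .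
  moreover have "r * xseq n = (r * ln (r + 1) - L) / (r + 1)"
    using r unfolding xseq_eq[OF assms] r_def[symmetric] L_def[symmetric] by simp
  moreover have "\<dots> = ln (r + 1) - (ln (r + 1) + L) / (r + 1)"
    using r by (simp add: field_simps add_pos_pos)
  ultimately show ?thesis
    using r unfolding r_def by (simp add: ln_div)
qed

lemma xseq_numerator_bounds:
  assumes "0 < n"
  shows "real n - 1/(2 * real n) - ln n / 2 \<le> real n * ln (real n + 1) - ln (fact n)"
    and "real n * ln (real n + 1) - ln (fact n) \<le> real n"
proof -
  have r: "0 < real n" using assms by simp
  show "real n - 1/(2 * real n) - ln n / 2 \<le> real n * ln (real n + 1) - ln (fact n)"
    using ln_succ_diff_bounds(1)[OF r] ln_fact_bounds[of n] assms by (simp add: algebra_simps)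
  show "real n * ln (real n + 1) - ln (fact n) \<le> real n"
    using ln_succ_diff_bounds(2)[OF r] ln_fact_bounds[of n] assms by (simp add: algebra_simps)
qed

lemma xseq_bounds:
  assumes "0 < n"
  shows "1/real n - 1/real n^2 - ln n / (2 * real n^2) \<le> xseq n"
    and "xseq n \<le> 1/real n - 1/(2 * real n^2)"
proof -
  define r where "r = real n"
  have r: "1 \<le> r" using assms unfolding r_def by simp
  have "0 \<le> ln r * r"
    using r by simp
  then have "1/r - 1/r^2 - ln r / (2 * r^2) \<le> (r - 1/(2*r) - ln r / 2) / (r * (r + 1))"
    using r by (simp add: divide_simps power2_eq_square) (simp add: algebra_simps)
  also have "\<dots> \<le> (r * ln (r + 1) - ln (fact n)) / (r * (r + 1))"
    using xseq_numerator_bounds(1)[OF assms] r unfolding r_def[symmetric]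
    by (intro divide_right_mono) simp_all
  finally show "1/real n - 1/real n^2 - ln n / (2 * real n^2) \<le> xseq n"
    unfolding xseq_eq[OF assms] r_def .
  have "(r * ln (r + 1) - ln (fact n)) / (r * (r + 1)) \<le> r / (r * (r + 1))"
    using xseq_numerator_bounds(2)[OF assms] r unfolding r_def[symmetric]
    by (intro divide_right_mono) simp_all
  also have "\<dots> \<le> 1/r - 1/(2 * r^2)"
    using r by (simp add: divide_simps power2_eq_square) (simp add: algebra_simps)
  finally show "xseq n \<le> 1/real n - 1/(2 * real n^2)"
    unfolding xseq_eq[OF assms] r_def .
qed

lemma ln_ratio_le:
  fixes t :: real
  assumes "0 \<le> t"
  shows "ln (1 + 2*t) - ln (1 + t) \<le> t - 3/2*t^2 + 8/3*t^3"
proof -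
  have "ln (1 + 2*t) \<le> 2*t - (2*t)^2/2 + (2*t)^3/3"
    using assms by (intro ln_add_one_le) simp
  moreover have "t - t^2/2 \<le> ln (1 + t)"
    using assms by (rule ln_add_one_ge)
  ultimately show ?thesis
    by (simp add: power_mult_distrib)
qed

lemma power_Suc_le_mult:
  fixes t c :: real
  assumes "0 \<le> t" "t \<le> c"
  shows "t ^ Suc k \<le> t ^ k * c"
  unfolding power_Suc2 using assms by (intro mult_left_mono) simp_all

lemma quadratic_form_at_endpoint_le:
  fixes t m a d :: real
  assumes t: "0 < t" "t \<le> 1/468" and m: "0 \<le> m" "m \<le> 1/40" "m^2 \<le> t/5"
    and a: "a = t - t^2 - t*m/2" and d: "d = t - 3/2*t^2 + 8/3*t^3"
  shows "a^2 - (2 - d)*t*a + t*d \<le> -2/5 * t^3"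
proof -
  have "a^2 - (2 - d)*t*a + t*d = -1/2*t^3 + 1/4*(t^2*m^2) + 1/2*(t^3*m) + 7/6*t^4
      + 3/4*(t^4*m) + 25/6*t^5 - 4/3*(t^5*m) - 8/3*t^6"
    unfolding a d by algebra
  moreover have "t^2*m^2 \<le> t^2*(t/5)"
    using t m by (intro mult_left_mono) simp_all
  moreover have "t^2*(t/5) = t^3/5"
    by (simp add: power2_eq_square power3_eq_cube)
  moreover have "t^3*m \<le> t^3*(1/40)" "t^4*m \<le> t^4*(1/40)"
    using t m by (intro mult_left_mono; simp)+
  moreover have "t^4 \<le> t^3*(1/468)" "t^5 \<le> t^4*(1/468)"
    using t power_Suc_le_mult[of t "1/468"] by (simp_all add: numeral_eq_Suc)
  moreover have "0 \<le> t^3" "0 \<le> t^5*m" "0 \<le> t^6"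
    using t m by simp_all
  ultimately show ?thesis
    by linarith
qed

lemma quadratic_form_le:
  fixes t m x d :: real
  assumes t: "0 < t" "t \<le> 1/468" and m: "0 \<le> m" "m \<le> 1/40" "m^2 \<le> t/5"
    and x: "t - t^2 - t*m/2 \<le> x" "x \<le> t - t^2/2"
    and d: "d \<le> t - 3/2*t^2 + 8/3*t^3"
  shows "x^2 - (2 - d)*t*x + t*d \<le> -2/5 * t^3"
proof -
  define a where "a = t - t^2 - t*m/2"
  define d1 where "d1 = t - 3/2*t^2 + 8/3*t^3"
  have tt: "t^2 \<le> t * (1/468)" "t^3 \<le> t^2 * (1/468)"
    using t power_Suc_le_mult[of t "1/468"] by (simp_all add: numeral_eq_Suc)
  have "0 \<le> t*m" "t*m \<le> t * (1/40)"
    using t m by (simp_all add: mult_left_mono)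
  then have a_ge: "0 \<le> a" and a_le: "a \<le> t - t^2"
    using tt unfolding a_def by linarith+
  have "d \<le> t"
    using d tt zero_le_power2[of t] by linarith
  then have "d*t \<le> t^2"
    using t by (simp add: power2_eq_square mult_right_mono)
  moreover have "(2 - d)*t = 2*t - d*t"
    by (simp add: algebra_simps)
  ultimately have "x + a \<le> (2 - d)*t"
    using x(2) a_le zero_le_power2[of t] by linarith
  \<comment> \<open>the vertex \<open>(2 - d) t / 2\<close> lies right of \<open>x\<close>, so the quadratic decreases on \<open>[a, x]\<close>\<close>
  then have "(x - a) * (x + a - (2 - d)*t) \<le> 0"
    using x(1) unfolding a_def by (simp add: mult_nonneg_nonpos)
  then have "x^2 - (2 - d)*t*x + t*d \<le> a^2 - (2 - d)*t*a + t*d"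
    by (simp add: algebra_simps power2_eq_square)
  also have "\<dots> \<le> a^2 - (2 - d1)*t*a + t*d1"
  proof -
    have "a^2 - (2 - d1)*t*a + t*d1 = (a^2 - (2 - d)*t*a + t*d) + t*(a + 1)*(d1 - d)"
      by algebra
    moreover have "0 \<le> t*(a + 1)*(d1 - d)"
      using t a_ge d unfolding d1_def by simp
    ultimately show ?thesis by linarith
  qed
  also have "\<dots> \<le> -2/5 * t^3"
    using t m a_def d1_def by (rule quadratic_form_at_endpoint_le)
  finally show ?thesis .
qed

lemma weighted_mean_bounds:
  fixes t x y d :: real
  assumes "0 < t" "0 \<le> d" "d \<le> 2*x" and y: "(1 + 2*t) * y = x + t*d"
  shows "0 \<le> y" and "y \<le> x" and "x - y \<le> 2*t*x"
proof -
  have "0 \<le> (1 + 2*t) * y" "(1 + 2*t) * y \<le> (1 + 2*t) * x"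
    using assms mult_left_mono[of d "2*x" t] by (simp_all add: algebra_simps)
  then show "0 \<le> y" "y \<le> x"
    using assms(1) by (simp_all add: zero_le_mult_iff)
  have "(1 + 2*t) * (x - y) \<le> (1 + 2*t) * (2*t*x)"
    using assms \<open>0 \<le> y\<close> \<open>y \<le> x\<close> by (simp add: algebra_simps mult_nonneg_nonneg)
  then show "x - y \<le> 2*t*x"
    using assms(1) by simp
qed

lemma exp_add_exp_neg_estimate:
  fixes t x y d :: real
  assumes t: "0 < t" "t \<le> 1/468" and x: "t/2 \<le> x" "x \<le> t" and d: "0 \<le> d" "d \<le> t"
    and y: "(1 + 2*t) * y = x + t*d"
    and quadratic: "x^2 - (2 - d)*t*x + t*d \<le> -2/5 * t^3"
  shows "exp y + exp (-x) \<le> 2 - 25/72*t^3 - t^4/2"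
proof -
  have "d \<le> 2*x" using d x by simp
  note mean = weighted_mean_bounds[OF t(1) d(1) this y]
  have taylor: "exp y + exp (-x) \<le> 2 + (y - x + x*y) + (y - x)^2/2 + x^4/6"
    using mean x t by (intro exp_add_exp_neg_le_taylor) simp_all
  have "2*t*x \<le> 2*t*t"
    using x t by (intro mult_left_mono) simp_all
  then have "x - y \<le> 2*t^2"
    using mean(3) by (simp add: power2_eq_square)
  then have "(x - y)^2 \<le> (2*t^2)^2"
    using mean(2) by (intro power_mono) simp_all
  then have "(y - x)^2 \<le> 4*t^4"
    by (simp add: power2_commute power_mult_distrib flip: power_mult)
  moreover have "x^4 \<le> t^4"
    using x t by (intro power_mono) simp_all
  moreover have "y - x + x*y \<le> -25/72*t^3 - 8/3*t^4"
  proof (rule mult_left_le_imp_le)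
    have "(1 + 2*t) * (y - x + x*y) = x^2 - (2 - d)*t*x + t*d"
      using y by algebra
    moreover have "(1 + 2*t) * (-25/72*t^3 - 8/3*t^4) = -25/72*t^3 - 121/36*t^4 - 16/3*t^5"
      by algebra
    moreover have "t^4 \<le> t^3 * (1/468)" "t^5 \<le> t^4 * (1/468)" "0 \<le> t^3"
      using t power_Suc_le_mult[of t "1/468"] by (simp_all add: numeral_eq_Suc)
    ultimately show "(1 + 2*t) * (y - x + x*y) \<le> (1 + 2*t) * (-25/72*t^3 - 8/3*t^4)"
      using quadratic by linarith
  qed (use t in simp)
  ultimately show ?thesis
    using taylor by linarith
qed

lemma ln_div_self_bounds:
  fixes x :: real
  assumes "468 \<le> x"
  shows "(ln x / x)^2 \<le> 1 / (5*x)" and "ln x / x \<le> 1/40"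
proof -
  have "(ln x)^2 \<le> x/5"
    using assms by (intro ln_squared_le) simp
  then show "(ln x / x)^2 \<le> 1 / (5*x)"
    using assms by (simp add: power_divide divide_simps power2_eq_square)
  also have "\<dots> \<le> (1/40)^2"
    using assms by (simp add: power2_eq_square divide_simps)
  finally show "ln x / x \<le> 1/40"
    by (rule power2_le_imp_le) simp
qed

lemma exp_xseq_sum_le:
  assumes "468 \<le> n"
  shows "exp (xseq (n + 1)) + exp (- xseq n) \<le> 2 - 25/(72 * real n^3) - 1/(2 * real n^4)"
proof -
  define r where "r = real n"
  define t where "t = 1/r"
  define m where "m = ln r / r"
  define d where "d = ln ((r + 2) / (r + 1))"
  have n: "0 < n" using assms by simp
  have r: "468 \<le> r" using assms unfolding r_def by simp
  have t: "0 < t" "t \<le> 1/468"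
    using r unfolding t_def by (simp_all add: field_simps)
  have m: "0 \<le> m" "m \<le> 1/40" "m^2 \<le> t/5"
    using r ln_div_self_bounds[OF r] unfolding m_def t_def by simp_all
  have "t - t^2 - t*m/2 = 1/r - 1/r^2 - ln r / (2 * r^2)"
    unfolding t_def m_def by (simp add: power2_eq_square)
  then have x_lower: "t - t^2 - t*m/2 \<le> xseq n"
    using xseq_bounds(1)[OF n] unfolding r_def by simp
  have x_upper: "xseq n \<le> t - t^2/2"
    using xseq_bounds(2)[OF n] unfolding t_def r_def by (simp add: power_one_over)
  have "(r + 2) / (r + 1) = (1 + 2*t) / (1 + t)"
    using r unfolding t_def by (simp add: divide_simps)
  then have "d = ln (1 + 2*t) - ln (1 + t)"
    using t unfolding d_def by (simp add: ln_div add_pos_pos)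
  then have d: "0 \<le> d" "d \<le> t - 3/2*t^2 + 8/3*t^3"
    using t ln_ratio_le[of t] by simp_all
  have "(1 + 2*t) * xseq (n + 1) = t * ((r + 2) * xseq (n + 1))"
    using r unfolding t_def by (simp add: field_simps)
  also have "\<dots> = t * (r * xseq n + d)"
    using xseq_Suc[OF n] unfolding r_def d_def by simp
  also have "\<dots> = xseq n + t*d"
    using r unfolding t_def by (simp add: field_simps)
  finally have y: "(1 + 2*t) * xseq (n + 1) = xseq n + t*d" .
  have "t^2 \<le> t * (1/468)" "t^3 \<le> t^2 * (1/468)" "t*m \<le> t * (1/40)"
    using t m(2) power_Suc_le_mult[of t "1/468"] by (simp_all add: numeral_eq_Suc mult_left_mono)
  then have x: "t/2 \<le> xseq n" "xseq n \<le> t" and d_le: "d \<le> t"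
    using x_lower x_upper d(2) zero_le_power2[of t] by linarith+
  have "(xseq n)^2 - (2 - d)*t*xseq n + t*d \<le> -2/5 * t^3"
    using t m x_lower x_upper d(2) by (rule quadratic_form_le)
  then have "exp (xseq (n + 1)) + exp (- xseq n) \<le> 2 - 25/72*t^3 - t^4/2"
    using t x d(1) d_le y by (intro exp_add_exp_neg_estimate)
  then show ?thesis
    unfolding t_def r_def by (simp add: power_one_over)
qed

lemma ell_ratios_sum:
  assumes "0 < n"
  shows "ell (n+2) / ell (n+1) + ell n / ell (n+1) = exp (xseq (n+1)) + exp (- xseq n)"
  using ell_Suc_div[of "n+1"] ell_Suc_div[OF assms, symmetric] by (simp add: exp_minus)

lemma fifth_order_term_bounds:
  assumes "468 \<le> n"
  defines "K \<equiv> ln (real n) / 2 + 101 / 288 + ln (2 * pi) / 2"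
  shows "0 \<le> K / real n^5" and "2 * (K / real n^5) < 25 / (72 * real n^3)"
proof -
  have n: "468 \<le> real n" using assms by simp
  show "0 \<le> K / real n^5"
    using n pi_ge_two unfolding K_def by simp
  have "ln (real n) \<le> real n / 2" "ln (2 * pi) \<le> 4"
    using n ln_le_half_self[of "real n"] ln_le_half_self[of "2 * pi"] pi_less_4 by simp_all
  moreover have "468 * real n \<le> real n * real n"
    using n by (intro mult_right_mono) simp_all
  ultimately have "K < 25/144 * real n^2"
    using n unfolding K_def power2_eq_square by linarith
  then show "2 * (K / real n^5) < 25 / (72 * real n^3)"
    using n by (simp add: divide_simps power2_eq_square eval_nat_numeral)
qed

theorem mainTheorem10:
  fixes n :: nat
  assumes "n \<ge> 468"
  shows "ell (n+2) / ell (n+1) + ell n / ell (n+1)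
           = 2 * exp ((xseq (n+1) - xseq n) / 2) * cosh ((xseq (n+1) + xseq n) / 2)
       \<and> 2 * exp ((xseq (n+1) - xseq n) / 2) * cosh ((xseq (n+1) + xseq n) / 2)
           \<le> 2 * (1 - 25 / (144 * real n ^ 3) - 1 / (4 * real n ^ 4)
                 + (ln (real n) / 2 + 101 / 288 + ln (2 * pi) / 2) / real n ^ 5)
       \<and> 2 * (1 - 25 / (144 * real n ^ 3) - 1 / (4 * real n ^ 4)
                 + (ln (real n) / 2 + 101 / 288 + ln (2 * pi) / 2) / real n ^ 5) < 2"
proof -
  define K where "K = ln (real n) / 2 + 101 / 288 + ln (2 * pi) / 2"
  have "2 * (1 - 25 / (144 * real n^3) - 1 / (4 * real n^4) + K / real n^5)
      = (2 - 25 / (72 * real n^3) - 1 / (2 * real n^4)) + 2 * (K / real n^5)"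
    by (simp add: algebra_simps)
  moreover have n: "0 < n"
    using assms by simp
  moreover have "0 < 1 / (2 * real n^4)"
    using n by simp
  ultimately show ?thesis
    using ell_ratios_sum[OF n] exp_xseq_sum_le[OF assms] fifth_order_term_bounds[OF assms]
    unfolding exp_add_exp_neg_eq_cosh[symmetric] K_def[symmetric]
    by (intro conjI; linarith)
qed

end
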